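(* Let $p\in[1,\infty]$ and let $\{E_i\}_{i\in I}$ be a nonempty family of locally convex spaces. (i) If $I=\omega$ is countable, then the topological product $\prod_{i\in\omega}E_i$ has the $wCSP_p$ if and only if every $E_i$ has the $wCSP_p$. (ii) The locally convex direct sum $\bigoplus_{i\in I}E_i$ has the $wCSP_p$ if and only if every $E_i$ has the $wCSP_p$.
   Context: Locally convex spaces are Hausdorff over $\mathbb R$ or $\mathbb C$. For $p\in[1,\infty]$, a sequence $(x_n)$ in a locally convex space $E$ is weakly $p$-summable if for every $\chi\in E'$ the sequence $(\chi(x_n))_n$ lies in $\ell_p$ (if $p<\infty$) or in $c_0$ (if $p=\infty$). A sequence $(x_n)$ is weakly $p$-Cauchy if for every pair of strictly increasing sequences $(k_n),(j_n)$ in $\omega$ the sequence $(x_{k_n}-x_{j_n})_n$ is weakly $p$-summable. $E$ has the weak Cauchy subsequence property of order $p$ ($wCSP_p$) if every bounded sequence in $E$ has a weakly $p$-Cauchy subsequence. *)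

theory Defs
  imports "HOL-Analysis.Analysis" "HOL-Library.Function_Algebras"
begin

text \<open>Scalars: a type of class real_normed_field that is also a finite-dimensional
  Euclidean space over the reals, i.e. (up to isometric isomorphism) the real or the
  complex numbers.  A space is a linear subspace V of an ambient additive group 'a,
  with scalar multiplication sc, and its locally convex topology is given by a
  family P of seminorms.\<close>

definition lin_space :: "('k::field \<Rightarrow> 'a::ab_group_add \<Rightarrow> 'a) \<Rightarrow> 'a set \<Rightarrow> bool" where
  "lin_space sc V \<longleftrightarrow> 0 \<in> V \<and> (\<forall>x\<in>V. \<forall>y\<in>V. x + y \<in> V) \<and> (\<forall>c. \<forall>x\<in>V. sc c x \<in> V)
     \<and> (\<forall>a. \<forall>x\<in>V. \<forall>y\<in>V. sc a (x + y) = sc a x + sc a y)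
     \<and> (\<forall>a b. \<forall>x\<in>V. sc (a + b) x = sc a x + sc b x)
     \<and> (\<forall>a b. \<forall>x\<in>V. sc a (sc b x) = sc (a * b) x)
     \<and> (\<forall>x\<in>V. sc 1 x = x)"

definition seminorm_on :: "('k::real_normed_field \<Rightarrow> 'a::ab_group_add \<Rightarrow> 'a) \<Rightarrow> 'a set \<Rightarrow> ('a \<Rightarrow> real) \<Rightarrow> bool" where
  "seminorm_on sc V q \<longleftrightarrow> (\<forall>x\<in>V. \<forall>y\<in>V. q (x + y) \<le> q x + q y)
     \<and> (\<forall>c. \<forall>x\<in>V. q (sc c x) = norm c * q x)"

definition lcs :: "('k::real_normed_field \<Rightarrow> 'a::ab_group_add \<Rightarrow> 'a) \<Rightarrow> 'a set \<Rightarrow> ('a \<Rightarrow> real) set \<Rightarrow> bool" where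
  "lcs sc V P \<longleftrightarrow> lin_space sc V \<and> (\<forall>q\<in>P. seminorm_on sc V q)
     \<and> (\<forall>x\<in>V. x \<noteq> 0 \<longrightarrow> (\<exists>q\<in>P. q x \<noteq> 0))"

text \<open>Topological dual: continuous linear functionals (continuity w.r.t. the
  topology generated by P, i.e. domination by finitely many seminorms of P).\<close>
definition dual :: "('k::real_normed_field \<Rightarrow> 'a::ab_group_add \<Rightarrow> 'a) \<Rightarrow> 'a set \<Rightarrow> ('a \<Rightarrow> real) set \<Rightarrow> ('a \<Rightarrow> 'k) set" where
  "dual sc V P = {f. (\<forall>x\<in>V. \<forall>y\<in>V. f (x + y) = f x + f y)
     \<and> (\<forall>c. \<forall>x\<in>V. f (sc c x) = c * f x)
     \<and> (\<exists>F C. F \<subseteq> P \<and> finite F \<and> (\<forall>x\<in>V. norm (f x) \<le> C * (\<Sum>q\<in>F. q x)))}"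

definition lcs_bounded :: "('a \<Rightarrow> real) set \<Rightarrow> 'a set \<Rightarrow> bool" where
  "lcs_bounded P B \<longleftrightarrow> (\<forall>q\<in>P. bdd_above (q ` B))"

text \<open>Scalar sequences in ell_p (p finite) or c_0 (p = infinity).\<close>
definition in_lp :: "ereal \<Rightarrow> (nat \<Rightarrow> 'k::real_normed_field) \<Rightarrow> bool" where
  "in_lp p a \<longleftrightarrow> (if p = \<infinity> then a \<longlonglongrightarrow> 0
                   else summable (\<lambda>n. norm (a n) powr real_of_ereal p))"

definition weakly_p_summable ::
  "ereal \<Rightarrow> ('k::real_normed_field \<Rightarrow> 'a::ab_group_add \<Rightarrow> 'a) \<Rightarrow> 'a set \<Rightarrow> ('a \<Rightarrow> real) set \<Rightarrow> (nat \<Rightarrow> 'a) \<Rightarrow> bool" where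
  "weakly_p_summable p sc V P x \<longleftrightarrow> (\<forall>n. x n \<in> V) \<and> (\<forall>f\<in>dual sc V P. in_lp p (\<lambda>n. f (x n)))"

definition weakly_p_Cauchy ::
  "ereal \<Rightarrow> ('k::real_normed_field \<Rightarrow> 'a::ab_group_add \<Rightarrow> 'a) \<Rightarrow> 'a set \<Rightarrow> ('a \<Rightarrow> real) set \<Rightarrow> (nat \<Rightarrow> 'a) \<Rightarrow> bool" where
  "weakly_p_Cauchy p sc V P x \<longleftrightarrow>
     (\<forall>k j. strict_mono k \<and> strict_mono j \<longrightarrow> weakly_p_summable p sc V P (\<lambda>n. x (k n) - x (j n)))"

definition wCSP ::
  "ereal \<Rightarrow> ('k::real_normed_field \<Rightarrow> 'a::ab_group_add \<Rightarrow> 'a) \<Rightarrow> 'a set \<Rightarrow> ('a \<Rightarrow> real) set \<Rightarrow> bool" where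
  "wCSP p sc V P \<longleftrightarrow> (\<forall>x::nat \<Rightarrow> 'a. (\<forall>n. x n \<in> V) \<and> lcs_bounded P (range x) \<longrightarrow>
      (\<exists>r::nat \<Rightarrow> nat. strict_mono r \<and> weakly_p_Cauchy p sc V P (x \<circ> r)))"

definition fam_sc :: "'i set \<Rightarrow> ('i \<Rightarrow> 'k \<Rightarrow> 'a::ab_group_add \<Rightarrow> 'a) \<Rightarrow> 'k \<Rightarrow> ('i \<Rightarrow> 'a) \<Rightarrow> ('i \<Rightarrow> 'a)" where
  "fam_sc I sc c x = (\<lambda>i. if i \<in> I then sc i c (x i) else 0)"

text \<open>Topological product over I (coordinates outside I are 0): the product topology
  is generated by the seminorms q(x_i), q in P_i.\<close>
definition prod_V :: "'i set \<Rightarrow> ('i \<Rightarrow> 'a::ab_group_add set) \<Rightarrow> ('i \<Rightarrow> 'a) set" where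
  "prod_V I V = {x. (\<forall>i\<in>I. x i \<in> V i) \<and> (\<forall>i. i \<notin> I \<longrightarrow> x i = 0)}"

definition prod_P :: "'i set \<Rightarrow> ('i \<Rightarrow> ('a \<Rightarrow> real) set) \<Rightarrow> (('i \<Rightarrow> 'a) \<Rightarrow> real) set" where
  "prod_P I P = {(\<lambda>x. q (x i)) | i q. i \<in> I \<and> q \<in> P i}"

definition sum_V :: "'i set \<Rightarrow> ('i \<Rightarrow> 'a::ab_group_add set) \<Rightarrow> ('i \<Rightarrow> 'a) set" where
  "sum_V I V = {x. x \<in> prod_V I V \<and> finite {i. x i \<noteq> 0}}"

definition inj_sum :: "'i \<Rightarrow> 'a::ab_group_add \<Rightarrow> ('i \<Rightarrow> 'a)" where
  "inj_sum i v = (\<lambda>j. if j = i then v else 0)"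

text \<open>Locally convex direct sum: the finest locally convex topology making all canonical
  injections continuous; its continuous seminorms are exactly the seminorms q on the sum
  such that each q o inj_i is continuous on E_i.\<close>
definition sum_P :: "'i set \<Rightarrow> ('i \<Rightarrow> 'k::real_normed_field \<Rightarrow> 'a::ab_group_add \<Rightarrow> 'a) \<Rightarrow>
    ('i \<Rightarrow> 'a set) \<Rightarrow> ('i \<Rightarrow> ('a \<Rightarrow> real) set) \<Rightarrow> (('i \<Rightarrow> 'a) \<Rightarrow> real) set" where
  "sum_P I sc V P = {q. seminorm_on (fam_sc I sc) (sum_V I V) q \<and>
     (\<forall>i\<in>I. \<exists>F C. F \<subseteq> P i \<and> finite F \<and> (\<forall>v\<in>V i. q (inj_sum i v) \<le> C * (\<Sum>p\<in>F. p v)))}"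

end

theory Submission
  imports Defs "HOL-Library.Diagonal_Subsequence"
begin

text \<open>Coordinate projections and canonical injections are continuous and linear, and they
  carry bounded sequences to bounded sequences in both directions; hence a weakly \<open>p\<close>-Cauchy
  subsequence in the product or sum yields one in each factor.

  Conversely, a bounded sequence has bounded coordinates, and for a countable product a
  diagonal argument gives a subsequence that is weakly \<open>p\<close>-Cauchy in every coordinate.  This
  suffices, because a continuous functional on the product is dominated by finitely many
  coordinate seminorms and is therefore a finite sum of continuous functionals of the factors.
  In a locally convex direct sum a bounded sequence lives in finitely many summands:
  otherwise a suitably weighted sum of coordinate seminorms would be a continuous seminorm
  that is unbounded on it.  So finitely many extractions suffice, without any countability.\<close>

subsection \<open>Linear spaces, seminorms and continuous functionals\<close>

lemma lin_space_scale_zero_left: assumes "lin_space sc V" "x \<in> V" shows "sc 0 x = 0"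
proof -
  have "sc (0 + 0) x = sc 0 x + sc 0 x" using assms unfolding lin_space_def by blast
  then show ?thesis by simp
qed

lemma lin_space_scale_zero_right: assumes "lin_space sc V" shows "sc c 0 = 0"
proof -
  have "sc c (0 + 0) = sc c 0 + sc c 0" using assms unfolding lin_space_def by blast
  then show ?thesis by simp
qed

lemma lin_space_scale_minus_one: assumes "lin_space sc V" "x \<in> V" shows "sc (-1) x = - x"
proof -
  have "sc (1 + -1) x = sc 1 x + sc (-1) x" and "sc 1 x = x"
    using assms unfolding lin_space_def by blast+
  then have "x + sc (-1) x = 0" using lin_space_scale_zero_left[OF assms] by simp
  then show ?thesis by (simp add: eq_neg_iff_add_eq_0 add.commute)
qed

lemma lin_space_diff: assumes "lin_space sc V" "x \<in> V" "y \<in> V" shows "x - y \<in> V"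
proof -
  have "x + sc (-1) y \<in> V" using assms unfolding lin_space_def by blast
  then show ?thesis using lin_space_scale_minus_one[OF assms(1,3)] by simp
qed

lemma seminorm_on_zero: assumes "lin_space sc V" "seminorm_on sc V q" shows "q 0 = 0"
proof -
  have "0 \<in> V" using assms unfolding lin_space_def by blast
  then have "q (sc 0 0) = norm (0::'a) * q 0" using assms unfolding seminorm_on_def by blast
  then show ?thesis using lin_space_scale_zero_left[OF assms(1) \<open>0 \<in> V\<close>] by simp
qed

lemma seminorm_on_nonneg:
  assumes "lin_space sc V" "seminorm_on sc V q" "x \<in> V" shows "0 \<le> q x"
proof -
  have "q (sc (-1) x) = norm (-1::'a) * q x" using assms unfolding seminorm_on_def by blast
  then have q_neg: "q (- x) = q x" using lin_space_scale_minus_one[OF assms(1,3)] by simp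
  have "0 \<in> V" using assms(1) unfolding lin_space_def by blast
  then have "- x \<in> V" using lin_space_diff[OF assms(1) _ assms(3)] by fastforce
  then have "q (x + - x) \<le> q x + q (- x)" using assms unfolding seminorm_on_def by blast
  then show ?thesis using q_neg seminorm_on_zero[OF assms(1,2)] by simp
qed

lemma lcs_seminorm_nonneg: "lcs sc V P \<Longrightarrow> q \<in> P \<Longrightarrow> x \<in> V \<Longrightarrow> 0 \<le> q x"
  unfolding lcs_def using seminorm_on_nonneg by blast

lemma lcs_seminorm_zero: "lcs sc V P \<Longrightarrow> q \<in> P \<Longrightarrow> q 0 = 0"
  unfolding lcs_def using seminorm_on_zero by blast

lemma lcs_bounded_subset: "lcs_bounded P B \<Longrightarrow> A \<subseteq> B \<Longrightarrow> lcs_bounded P A"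
  unfolding lcs_bounded_def by (meson bdd_above_mono image_mono)

text \<open>For a seminorm \<open>g\<close>, \<open>dominated_by P V g\<close> says that \<open>g\<close> is continuous for the topology
  generated by \<open>P\<close>.\<close>
definition dominated_by :: "('a \<Rightarrow> real) set \<Rightarrow> 'a set \<Rightarrow> ('a \<Rightarrow> real) \<Rightarrow> bool" where
  "dominated_by P V g \<longleftrightarrow> (\<exists>F C. F \<subseteq> P \<and> finite F \<and> (\<forall>x\<in>V. g x \<le> C * (\<Sum>q\<in>F. q x)))"

lemma mem_dual_iff:
  "f \<in> dual sc V P \<longleftrightarrow> (\<forall>x\<in>V. \<forall>y\<in>V. f (x + y) = f x + f y) \<and> (\<forall>c. \<forall>x\<in>V. f (sc c x) = c * f x)
     \<and> dominated_by P V (\<lambda>x. norm (f x))"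
  unfolding dual_def dominated_by_def by blast

lemma dual_add: "f \<in> dual sc V P \<Longrightarrow> x \<in> V \<Longrightarrow> y \<in> V \<Longrightarrow> f (x + y) = f x + f y"
  unfolding dual_def by blast

lemma dual_zero: assumes "f \<in> dual sc V P" "lin_space sc V" shows "f 0 = 0"
proof -
  have "0 \<in> V" using assms(2) unfolding lin_space_def by blast
  then have "f (0 + 0) = f 0 + f 0" using dual_add[OF assms(1)] by blast
  then show ?thesis by simp
qed

lemma dominated_by_mem: "q \<in> P \<Longrightarrow> dominated_by P V q"
  unfolding dominated_by_def by (intro exI[of _ "{q}"] exI[of _ 1]) auto

lemma dominated_by_nonpos: "\<forall>x\<in>V. g x \<le> 0 \<Longrightarrow> dominated_by P V g"
  unfolding dominated_by_def by (intro exI[of _ "{}"] exI[of _ 0]) auto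

lemma dominated_by_nonneg_const:
  assumes "dominated_by P V g" "\<forall>q\<in>P. \<forall>x\<in>V. 0 \<le> q x"
  obtains F C where "F \<subseteq> P" "finite F" "0 \<le> C" "\<forall>x\<in>V. g x \<le> C * (\<Sum>q\<in>F. q x)"
proof -
  obtain F C where F: "F \<subseteq> P" "finite F" "\<forall>x\<in>V. g x \<le> C * (\<Sum>q\<in>F. q x)"
    using assms(1) unfolding dominated_by_def by blast
  have "g x \<le> max C 0 * (\<Sum>q\<in>F. q x)" if "x \<in> V" for x
  proof -
    have "0 \<le> (\<Sum>q\<in>F. q x)" using F(1) assms(2) that by (intro sum_nonneg) auto
    then have "C * (\<Sum>q\<in>F. q x) \<le> max C 0 * (\<Sum>q\<in>F. q x)" by (intro mult_right_mono) auto
    then show ?thesis using F(3) that by force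
  qed
  then show thesis using that[OF F(1,2), of "max C 0"] by auto
qed

lemma dominated_by_sum:
  assumes "finite A" "\<forall>a\<in>A. dominated_by P V (h a)" "\<forall>q\<in>P. \<forall>x\<in>V. 0 \<le> q x"
  shows "dominated_by P V (\<lambda>x. \<Sum>a\<in>A. h a x)"
  using assms(1,2)
proof (induction A rule: finite_induct)
  case empty
  then show ?case by (intro dominated_by_nonpos) simp
next
  case (insert a A)
  have "dominated_by P V (h a)" "dominated_by P V (\<lambda>x. \<Sum>a\<in>A. h a x)"
    using insert by simp_all
  obtain F C where F: "F \<subseteq> P" "finite F" "0 \<le> C" "\<forall>x\<in>V. h a x \<le> C * (\<Sum>q\<in>F. q x)"
    using dominated_by_nonneg_const[OF \<open>dominated_by P V (h a)\<close> assms(3)] by blast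
  obtain G D where G: "G \<subseteq> P" "finite G" "0 \<le> D" "\<forall>x\<in>V. (\<Sum>a\<in>A. h a x) \<le> D * (\<Sum>q\<in>G. q x)"
    using dominated_by_nonneg_const[OF \<open>dominated_by P V (\<lambda>x. \<Sum>a\<in>A. h a x)\<close> assms(3)] by blast
  have "h a x + (\<Sum>a\<in>A. h a x) \<le> (C + D) * (\<Sum>q\<in>F \<union> G. q x)" if x: "x \<in> V" for x
  proof -
    have "(\<Sum>q\<in>F. q x) \<le> (\<Sum>q\<in>F \<union> G. q x)" "(\<Sum>q\<in>G. q x) \<le> (\<Sum>q\<in>F \<union> G. q x)"
      using F G assms(3) x by (auto intro!: sum_mono2)
    then have "C * (\<Sum>q\<in>F. q x) + D * (\<Sum>q\<in>G. q x) \<le> C * (\<Sum>q\<in>F \<union> G. q x) + D * (\<Sum>q\<in>F \<union> G. q x)"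
      using F(3) G(3) by (intro add_mono mult_left_mono)
    moreover have "h a x \<le> C * (\<Sum>q\<in>F. q x)" "(\<Sum>a\<in>A. h a x) \<le> D * (\<Sum>q\<in>G. q x)"
      using F(4) G(4) x by blast+
    ultimately show ?thesis by (simp add: distrib_right)
  qed
  then show ?case using F G insert.hyps unfolding dominated_by_def
    by (intro exI[of _ "F \<union> G"] exI[of _ "C + D"]) auto
qed

lemma dominated_by_comp:
  assumes g: "dominated_by P1 V1 g"
    and e: "\<forall>v\<in>V2. e v \<in> V1"
    and dom: "\<forall>q\<in>P1. dominated_by P2 V2 (\<lambda>v. q (e v))"
    and nonneg1: "\<forall>q\<in>P1. \<forall>x\<in>V1. 0 \<le> q x" and nonneg2: "\<forall>q\<in>P2. \<forall>v\<in>V2. 0 \<le> q v"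
  shows "dominated_by P2 V2 (\<lambda>v. g (e v))"
proof -
  obtain F C where F: "F \<subseteq> P1" "finite F" "0 \<le> C" "\<forall>x\<in>V1. g x \<le> C * (\<Sum>q\<in>F. q x)"
    using dominated_by_nonneg_const[OF g nonneg1] by blast
  have "dominated_by P2 V2 (\<lambda>v. \<Sum>q\<in>F. q (e v))"
    using F(1,2) dom nonneg2 by (intro dominated_by_sum) auto
  then obtain G D where G: "G \<subseteq> P2" "finite G" "\<forall>v\<in>V2. (\<Sum>q\<in>F. q (e v)) \<le> D * (\<Sum>q\<in>G. q v)"
    unfolding dominated_by_def by blast
  have "g (e v) \<le> (C * D) * (\<Sum>q\<in>G. q v)" if "v \<in> V2" for v
  proof -
    have "g (e v) \<le> C * (\<Sum>q\<in>F. q (e v))" using F(4) e that by blast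
    also have "\<dots> \<le> C * (D * (\<Sum>q\<in>G. q v))" using G(3) F(3) that by (intro mult_left_mono) auto
    finally show ?thesis by (simp add: mult.assoc)
  qed
  then show ?thesis using G(1,2) unfolding dominated_by_def by blast
qed

lemma dominated_by_bdd_above:
  assumes "dominated_by P V g" "\<forall>q\<in>P. \<forall>x\<in>V. 0 \<le> q x" "range x \<subseteq> V" "lcs_bounded P (range x)"
  shows "bdd_above (g ` range x)"
proof -
  obtain F C where F: "F \<subseteq> P" "finite F" "0 \<le> C" "\<forall>x\<in>V. g x \<le> C * (\<Sum>q\<in>F. q x)"
    using dominated_by_nonneg_const[OF assms(1,2)] by blast
  have "\<forall>q\<in>F. \<exists>b. \<forall>n. q (x n) \<le> b"
    using F(1) assms(4) unfolding lcs_bounded_def bdd_above_def by fast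
  then obtain b where b: "\<forall>q\<in>F. \<forall>n. q (x n) \<le> b q" by metis
  have "g (x n) \<le> C * (\<Sum>q\<in>F. b q)" for n
  proof -
    have "g (x n) \<le> C * (\<Sum>q\<in>F. q (x n))" using F(4) assms(3) by blast
    also have "\<dots> \<le> C * (\<Sum>q\<in>F. b q)" using b F(3) by (intro mult_left_mono sum_mono) auto
    finally show ?thesis .
  qed
  then show ?thesis by (intro bdd_aboveI) auto
qed

lemma dual_comp:
  assumes f: "f \<in> dual sc1 V1 P1"
    and e: "\<forall>v\<in>V2. e v \<in> V1"
    and e_add: "\<forall>v\<in>V2. \<forall>w\<in>V2. e (v + w) = e v + e w"
    and e_scale: "\<forall>c. \<forall>v\<in>V2. sc1 c (e v) = e (sc2 c v)"
    and dom: "\<forall>q\<in>P1. dominated_by P2 V2 (\<lambda>v. q (e v))"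
    and nonneg1: "\<forall>q\<in>P1. \<forall>x\<in>V1. 0 \<le> q x" and nonneg2: "\<forall>q\<in>P2. \<forall>v\<in>V2. 0 \<le> q v"
  shows "(\<lambda>v. f (e v)) \<in> dual sc2 V2 P2"
  unfolding mem_dual_iff
proof (intro conjI ballI allI)
  fix v w assume "v \<in> V2" "w \<in> V2"
  then show "f (e (v + w)) = f (e v) + f (e w)" using e e_add dual_add[OF f] by simp
next
  fix c v assume "v \<in> V2"
  then have "f (sc1 c (e v)) = c * f (e v)" using f e unfolding mem_dual_iff by blast
  then show "f (e (sc2 c v)) = c * f (e v)" using e_scale \<open>v \<in> V2\<close> by simp
next
  have "dominated_by P1 V1 (\<lambda>x. norm (f x))" using f unfolding mem_dual_iff by blast
  then show "dominated_by P2 V2 (\<lambda>v. norm (f (e v)))"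
    using e dom nonneg1 nonneg2 by (rule dominated_by_comp)
qed

subsection \<open>Sequence spaces and weakly \<open>p\<close>-Cauchy sequences\<close>

lemma norm_add_powr_le:
  fixes a b :: "'k::real_normed_vector" assumes "0 < r"
  shows "norm (a + b) powr r \<le> 2 powr r * (norm a powr r + norm b powr r)"
proof -
  define m where "m = max (norm a) (norm b)"
  have "norm (a + b) \<le> 2 * m" unfolding m_def using norm_triangle_ineq[of a b] by linarith
  then have "norm (a + b) powr r \<le> (2 * m) powr r" using assms by (simp add: powr_mono2)
  also have "\<dots> = 2 powr r * m powr r" unfolding m_def by (simp add: powr_mult)
  also have "\<dots> \<le> 2 powr r * (norm a powr r + norm b powr r)" unfolding m_def by (auto simp: max_def)
  finally show ?thesis .
qed

lemma in_lp_zero: "in_lp p (\<lambda>n. 0)"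
  unfolding in_lp_def by auto

lemma in_lp_add:
  assumes "1 \<le> p" "in_lp p a" "in_lp p b" shows "in_lp p (\<lambda>n. a n + b n)"
proof (cases "p = \<infinity>")
  case True
  then show ?thesis using assms(2,3) unfolding in_lp_def by (auto intro: tendsto_add_zero)
next
  case False
  define r where "r = real_of_ereal p"
  have "0 < r" using assms(1) False unfolding r_def by (cases p) auto
  have "summable (\<lambda>n. 2 powr r * (norm (a n) powr r + norm (b n) powr r))"
    using assms(2,3) False unfolding in_lp_def r_def by (auto intro: summable_mult summable_add)
  then have "summable (\<lambda>n. norm (a n + b n) powr r)"
    by (rule summable_comparison_test') (use norm_add_powr_le[OF \<open>0 < r\<close>] in auto)
  then show ?thesis using False unfolding in_lp_def r_def by auto
qed

lemma in_lp_sum: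
  assumes "1 \<le> p" "finite J" "\<forall>j\<in>J. in_lp p (a j)" shows "in_lp p (\<lambda>n. \<Sum>j\<in>J. a j n)"
  using assms(2,3)
  by (induction J rule: finite_induct) (auto simp: in_lp_zero intro: in_lp_add[OF assms(1)])

lemma in_lp_offset: "in_lp p (\<lambda>n. a (n + m)) \<Longrightarrow> in_lp p a"
  unfolding in_lp_def
  using summable_iff_shift[of "\<lambda>n. norm (a n) powr real_of_ereal p" m]
  by (auto intro: LIMSEQ_offset split: if_splits)

lemma weakly_p_Cauchy_zero:
  assumes "lin_space sc V" shows "weakly_p_Cauchy p sc V P (\<lambda>n. 0)"
proof -
  have "0 \<in> V" using assms unfolding lin_space_def by blast
  moreover have "\<forall>f\<in>dual sc V P. in_lp p (\<lambda>n. f 0)" using dual_zero[OF _ assms] in_lp_zero by metis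
  ultimately show ?thesis unfolding weakly_p_Cauchy_def weakly_p_summable_def by simp
qed

lemma weakly_p_Cauchy_subseq:
  assumes "weakly_p_Cauchy p sc V P x" "strict_mono r"
  shows "weakly_p_Cauchy p sc V P (x \<circ> r)"
  unfolding weakly_p_Cauchy_def
proof (intro allI impI)
  fix k j :: "nat \<Rightarrow> nat" assume "strict_mono k \<and> strict_mono j"
  then have "strict_mono (r \<circ> k) \<and> strict_mono (r \<circ> j)" using assms(2) strict_mono_o by blast
  then show "weakly_p_summable p sc V P (\<lambda>n. (x \<circ> r) (k n) - (x \<circ> r) (j n))"
    using assms(1) unfolding weakly_p_Cauchy_def comp_def by blast
qed

lemma strict_mono_offset_diff:
  fixes k :: "nat \<Rightarrow> nat"
  assumes "strict_mono k" shows "strict_mono (\<lambda>n. k (n + m) - m)" "k (n + m) - m + m = k (n + m)"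
proof -
  have ge: "n + m \<le> k (n + m)" for n using seq_suble[OF assms] by blast
  show "k (n + m) - m + m = k (n + m)" using ge[of n] by simp
  show "strict_mono (\<lambda>n. k (n + m) - m)"
  proof (rule strict_monoI)
    fix a b :: nat assume "a < b"
    then have "k (a + m) < k (b + m)" using assms by (simp add: strict_mono_less)
    then show "k (a + m) - m < k (b + m) - m" using ge[of a] by linarith
  qed
qed

text \<open>The tails of any two subsequences of \<open>x\<close> are subsequences of the shifted sequence,
  and \<open>in_lp\<close> ignores finitely many terms.\<close>
lemma weakly_p_Cauchy_offset:
  assumes C: "weakly_p_Cauchy p sc V P (\<lambda>n. x (n + m))"
    and V: "lin_space sc V" "\<forall>n. x n \<in> V"
  shows "weakly_p_Cauchy p sc V P x"
  unfolding weakly_p_Cauchy_def weakly_p_summable_def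
proof (intro allI impI conjI ballI)
  fix k j :: "nat \<Rightarrow> nat" and n
  show "x (k n) - x (j n) \<in> V" using lin_space_diff V by blast
next
  fix k j :: "nat \<Rightarrow> nat" and f
  assume kj: "strict_mono k \<and> strict_mono j" and f: "f \<in> dual sc V P"
  let ?k = "\<lambda>n. k (n + m) - m" and ?j = "\<lambda>n. j (n + m) - m"
  have "weakly_p_summable p sc V P (\<lambda>n. x (?k n + m) - x (?j n + m))"
    using C kj strict_mono_offset_diff(1) unfolding weakly_p_Cauchy_def by blast
  then have "in_lp p (\<lambda>n. f (x (k (n + m)) - x (j (n + m))))"
    using f kj unfolding weakly_p_summable_def by (simp add: strict_mono_offset_diff(2))
  then show "in_lp p (\<lambda>n. f (x (k n) - x (j n)))" by (rule in_lp_offset)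
qed

text \<open>The coordinates are enumerated by \<open>from_nat_into J\<close>; the diagonal sequence satisfies the
  condition of the \<open>k\<close>-th coordinate only from index \<open>k + 1\<close> on, which is enough by
  \<open>weakly_p_Cauchy_offset\<close>.\<close>
lemma diagonal_weakly_p_Cauchy_subseq:
  fixes x :: "nat \<Rightarrow> 'i \<Rightarrow> 'b::ab_group_add"
  assumes J: "countable J"
    and lin: "\<And>j. j \<in> J \<Longrightarrow> lin_space (sc j) (W j)"
    and wCSP: "\<And>j. j \<in> J \<Longrightarrow> wCSP p (sc j) (W j) (Q j)"
    and mem: "\<And>j n. j \<in> J \<Longrightarrow> x n j \<in> W j"
    and bounded: "\<And>j. j \<in> J \<Longrightarrow> lcs_bounded (Q j) (range (\<lambda>n. x n j))"
  obtains r where "strict_mono r" "\<And>j. j \<in> J \<Longrightarrow> weakly_p_Cauchy p (sc j) (W j) (Q j) (\<lambda>n. x (r n) j)"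
proof (cases "J = {}")
  case True
  then show thesis using that[of id] by (simp add: strict_mono_def)
next
  case False
  define Cauchy where "Cauchy j s \<longleftrightarrow> weakly_p_Cauchy p (sc j) (W j) (Q j) (\<lambda>n. x (s n) j)" for j s
  let ?e = "from_nat_into J"
  have ex: "\<exists>r. strict_mono r \<and> Cauchy (?e k) (s \<circ> r)" if "strict_mono s" for k and s :: "nat \<Rightarrow> nat"
  proof -
    have "?e k \<in> J" using False by (rule from_nat_into)
    have "lcs_bounded (Q (?e k)) (range (\<lambda>n. x (s n) (?e k)))"
      using bounded[OF \<open>?e k \<in> J\<close>] by (rule lcs_bounded_subset) auto
    then show ?thesis
      using wCSP[OF \<open>?e k \<in> J\<close>, unfolded wCSP_def, rule_format, of "\<lambda>n. x (s n) (?e k)"]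
        mem[OF \<open>?e k \<in> J\<close>] unfolding Cauchy_def comp_def by blast
  qed
  interpret diagonal: subseqs "\<lambda>k. Cauchy (?e k)"
    by unfold_locales (rule ex)
  have "weakly_p_Cauchy p (sc j) (W j) (Q j) (\<lambda>n. x (diagonal.diagseq n) j)" if "j \<in> J" for j
  proof -
    obtain k where k: "?e k = j" using from_nat_into_surj[OF J \<open>j \<in> J\<close>] by blast
    have "Cauchy (?e k) (diagonal.diagseq \<circ> (+) (Suc k))"
    proof (rule diagonal.diagseq_holds)
      fix r s :: "nat \<Rightarrow> nat" and n assume "strict_mono r" "Cauchy (?e n) s"
      then have "weakly_p_Cauchy p (sc (?e n)) (W (?e n)) (Q (?e n)) ((\<lambda>m. x (s m) (?e n)) \<circ> r)"
        unfolding Cauchy_def by (intro weakly_p_Cauchy_subseq)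
      then show "Cauchy (?e n) (s \<circ> r)" unfolding Cauchy_def by (simp add: comp_def)
    qed
    then have "weakly_p_Cauchy p (sc j) (W j) (Q j) (\<lambda>n. x (diagonal.diagseq (n + Suc k)) j)"
      unfolding Cauchy_def k by (simp add: add.commute)
    then show ?thesis by (rule weakly_p_Cauchy_offset) (use lin mem \<open>j \<in> J\<close> in auto)
  qed
  with diagonal.subseq_diagseq show thesis by (rule that)
qed

subsection \<open>Spaces of families with coordinatewise topology\<close>

lemma seminorm_on_coordinate:
  assumes "i \<in> I" "seminorm_on (sc i) (V i) q" "S \<subseteq> prod_V I V"
  shows "seminorm_on (fam_sc I sc) S (\<lambda>z. q (z i))"
  using assms unfolding seminorm_on_def prod_V_def fam_sc_def by (auto 0 3)

definition zero_on :: "'i set \<Rightarrow> ('i \<Rightarrow> 'a::zero) \<Rightarrow> 'i \<Rightarrow> 'a" where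
  "zero_on J z = (\<lambda>i. if i \<in> J then 0 else z i)"

text \<open>The common setting of products and locally convex direct sums: \<open>S\<close> is a space of
  families over \<open>I\<close> with seminorms \<open>PB\<close>, for which coordinate projections and canonical
  injections are continuous.\<close>
locale coordinate_lcs =
  fixes I :: "'i set" and sc :: "'i \<Rightarrow> 'k::real_normed_field \<Rightarrow> 'b::ab_group_add \<Rightarrow> 'b"
    and W :: "'i \<Rightarrow> 'b set" and Q :: "'i \<Rightarrow> ('b \<Rightarrow> real) set"
    and S :: "('i \<Rightarrow> 'b) set" and PB :: "(('i \<Rightarrow> 'b) \<Rightarrow> real) set"
  assumes components: "i \<in> I \<Longrightarrow> lcs (sc i) (W i) (Q i)"
    and lin_space: "lin_space (fam_sc I sc) S"
    and subset_prod_V: "S \<subseteq> prod_V I W"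
    and inj_sum_mem: "i \<in> I \<Longrightarrow> v \<in> W i \<Longrightarrow> inj_sum i v \<in> S"
    and zero_on_mem: "z \<in> S \<Longrightarrow> zero_on J z \<in> S"
    and seminorm: "\<And>q. q \<in> PB \<Longrightarrow> seminorm_on (fam_sc I sc) S q"
    and coordinate_seminorm: "\<And>i q. i \<in> I \<Longrightarrow> q \<in> Q i \<Longrightarrow> (\<lambda>z. q (z i)) \<in> PB"
    and inj_sum_dominated: "\<And>i q. i \<in> I \<Longrightarrow> q \<in> PB \<Longrightarrow> dominated_by (Q i) (W i) (\<lambda>v. q (inj_sum i v))"
begin

lemma nonneg: "\<forall>q\<in>PB. \<forall>z\<in>S. 0 \<le> q z"
  using seminorm_on_nonneg[OF lin_space] seminorm by blast

lemma component_lin_space: "i \<in> I \<Longrightarrow> lin_space (sc i) (W i)"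
  using components unfolding lcs_def by blast

lemma component_nonneg: "i \<in> I \<Longrightarrow> \<forall>q\<in>Q i. \<forall>v\<in>W i. 0 \<le> q v"
  using lcs_seminorm_nonneg components by blast

lemma coordinate_mem: "z \<in> S \<Longrightarrow> i \<in> I \<Longrightarrow> z i \<in> W i"
  using subset_prod_V unfolding prod_V_def by blast

lemma coordinate_outside: "z \<in> S \<Longrightarrow> i \<notin> I \<Longrightarrow> z i = 0"
  using subset_prod_V unfolding prod_V_def by blast

lemma inj_sum_coordinate_mem: assumes "z \<in> S" shows "inj_sum j (z j) \<in> S"
proof (cases "j \<in> I")
  case False
  then have "inj_sum j (z j) = 0" using coordinate_outside[OF assms] by (simp add: inj_sum_def fun_eq_iff)
  then show ?thesis using lin_space unfolding lin_space_def by simp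
qed (use inj_sum_mem coordinate_mem assms in blast)

lemma fam_sc_inj_sum: "i \<in> I \<Longrightarrow> fam_sc I sc c (inj_sum i v) = inj_sum i (sc i c v)"
  using lin_space_scale_zero_right components unfolding lcs_def fam_sc_def inj_sum_def
  by (auto simp: fun_eq_iff)

lemma dual_inj_sum:
  assumes "f \<in> dual (fam_sc I sc) S PB" "i \<in> I"
  shows "(\<lambda>v. f (inj_sum i v)) \<in> dual (sc i) (W i) (Q i)"
proof (rule dual_comp[OF assms(1)])
  show "\<forall>v\<in>W i. \<forall>w\<in>W i. inj_sum i (v + w) = inj_sum i v + inj_sum i w"
    by (simp add: inj_sum_def fun_eq_iff)
  show "\<forall>v\<in>W i. inj_sum i v \<in> S" using inj_sum_mem[OF assms(2)] by blast
  show "\<forall>c. \<forall>v\<in>W i. fam_sc I sc c (inj_sum i v) = inj_sum i (sc i c v)"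
    using fam_sc_inj_sum[OF assms(2)] by blast
  show "\<forall>q\<in>PB. dominated_by (Q i) (W i) (\<lambda>v. q (inj_sum i v))"
    using inj_sum_dominated[OF assms(2)] by blast
qed (use nonneg component_nonneg[OF assms(2)] in blast)+

lemma dual_coordinate:
  assumes "f \<in> dual (sc i) (W i) (Q i)" "i \<in> I"
  shows "(\<lambda>z. f (z i)) \<in> dual (fam_sc I sc) S PB"
proof (rule dual_comp[OF assms(1)])
  show "\<forall>q\<in>Q i. dominated_by PB S (\<lambda>z. q (z i))"
    using coordinate_seminorm[OF assms(2)] dominated_by_mem by blast
  show "\<forall>c. \<forall>z\<in>S. sc i c (z i) = fam_sc I sc c z i"
    using assms(2) by (simp add: fam_sc_def)
  show "\<forall>z\<in>S. z i \<in> W i" using coordinate_mem assms(2) by blast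
qed (use nonneg component_nonneg[OF assms(2)] in auto)

lemma bounded_coordinate:
  assumes "lcs_bounded PB (range x)" "i \<in> I"
  shows "lcs_bounded (Q i) (range (\<lambda>n. x n i))"
  unfolding lcs_bounded_def
proof
  fix q assume "q \<in> Q i"
  then have "(\<lambda>z. q (z i)) \<in> PB" by (rule coordinate_seminorm[OF assms(2)])
  with assms(1) have "bdd_above ((\<lambda>z. q (z i)) ` range x)" unfolding lcs_bounded_def by (rule bspec)
  then show "bdd_above (q ` range (\<lambda>n. x n i))" by (simp add: image_image)
qed

lemma bounded_inj_sum:
  assumes "i \<in> I" "\<forall>n. x n \<in> W i" "lcs_bounded (Q i) (range x)"
  shows "lcs_bounded PB (range (\<lambda>n. inj_sum i (x n)))"
  unfolding lcs_bounded_def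
proof
  fix q assume "q \<in> PB"
  then have "bdd_above ((\<lambda>v. q (inj_sum i v)) ` range x)"
    using inj_sum_dominated[OF assms(1)] component_nonneg[OF assms(1)] assms(2,3)
    by (intro dominated_by_bdd_above) auto
  then show "bdd_above (q ` range (\<lambda>n. inj_sum i (x n)))" by (simp add: image_image)
qed

lemma wCSP_component:
  assumes big: "wCSP p (fam_sc I sc) S PB" and i: "i \<in> I"
  shows "wCSP p (sc i) (W i) (Q i)"
  unfolding wCSP_def
proof (intro allI impI)
  fix x :: "nat \<Rightarrow> 'b" assume x: "(\<forall>n. x n \<in> W i) \<and> lcs_bounded (Q i) (range x)"
  let ?y = "\<lambda>n. inj_sum i (x n)"
  have "(\<forall>n. ?y n \<in> S) \<and> lcs_bounded PB (range ?y)"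
    using inj_sum_mem[OF i] bounded_inj_sum[OF i] x by blast
  then obtain r where r: "strict_mono r" "weakly_p_Cauchy p (fam_sc I sc) S PB (?y \<circ> r)"
    using big[unfolded wCSP_def, rule_format, of ?y] by blast
  have "weakly_p_Cauchy p (sc i) (W i) (Q i) (x \<circ> r)"
    unfolding weakly_p_Cauchy_def weakly_p_summable_def
  proof (intro allI impI conjI ballI)
    fix k l :: "nat \<Rightarrow> nat" and n
    show "(x \<circ> r) (k n) - (x \<circ> r) (l n) \<in> W i"
      using lin_space_diff[OF component_lin_space[OF i]] x by simp
  next
    fix k l :: "nat \<Rightarrow> nat" and f
    assume kl: "strict_mono k \<and> strict_mono l" and f: "f \<in> dual (sc i) (W i) (Q i)"
    have "\<forall>g\<in>dual (fam_sc I sc) S PB. in_lp p (\<lambda>n. g (?y (r (k n)) - ?y (r (l n))))"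
      using r(2) kl unfolding weakly_p_Cauchy_def weakly_p_summable_def comp_def by blast
    from this dual_coordinate[OF f i]
    have "in_lp p (\<lambda>n. f ((?y (r (k n)) - ?y (r (l n))) i))" by (rule bspec)
    then show "in_lp p (\<lambda>n. f ((x \<circ> r) (k n) - (x \<circ> r) (l n)))" by (simp add: inj_sum_def)
  qed
  then show "\<exists>r. strict_mono r \<and> weakly_p_Cauchy p (sc i) (W i) (Q i) (x \<circ> r)" using r(1) by blast
qed

lemma additive_eq_sum_coordinates:
  assumes add: "\<forall>x\<in>S. \<forall>y\<in>S. f (x + y) = f x + f y" and J: "finite J" and z: "z \<in> S"
  shows "f z = (\<Sum>j\<in>J. f (inj_sum j (z j))) + f (zero_on J z)"
  using J
proof (induction J rule: finite_induct)
  case empty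
  then show ?case by (simp add: zero_on_def)
next
  case (insert j J)
  have "zero_on J z = inj_sum j (z j) + zero_on (insert j J) z"
    using insert.hyps(2) by (auto simp: zero_on_def inj_sum_def fun_eq_iff)
  then have "f (zero_on J z) = f (inj_sum j (z j)) + f (zero_on (insert j J) z)"
    using add inj_sum_coordinate_mem zero_on_mem z by simp
  then show ?case using insert by (simp add: algebra_simps)
qed

lemma weakly_p_Cauchy_of_coordinates:
  assumes p: "1 \<le> p" and y: "\<forall>n. y n \<in> S"
    and coordinates: "\<forall>i\<in>I. weakly_p_Cauchy p (sc i) (W i) (Q i) (\<lambda>n. y n i)"
    and finite_dependence: "\<forall>f\<in>dual (fam_sc I sc) S PB. \<exists>J\<subseteq>I. finite J \<and>
       (\<forall>n m. f (zero_on J (y n - y m)) = 0)"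
  shows "weakly_p_Cauchy p (fam_sc I sc) S PB y"
  unfolding weakly_p_Cauchy_def weakly_p_summable_def
proof (intro allI impI conjI ballI)
  fix k l :: "nat \<Rightarrow> nat" and n
  show "y (k n) - y (l n) \<in> S" using lin_space_diff[OF lin_space] y by blast
next
  fix k l :: "nat \<Rightarrow> nat" and f
  assume kl: "strict_mono k \<and> strict_mono l" and f: "f \<in> dual (fam_sc I sc) S PB"
  obtain J where J: "J \<subseteq> I" "finite J" "\<forall>n m. f (zero_on J (y n - y m)) = 0"
    using finite_dependence f by blast
  let ?d = "\<lambda>n. y (k n) - y (l n)"
  have "in_lp p (\<lambda>n. \<Sum>j\<in>J. f (inj_sum j (?d n j)))"
  proof (intro in_lp_sum[OF p J(2)] ballI)
    fix j assume "j \<in> J"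
    then have "weakly_p_summable p (sc j) (W j) (Q j) (\<lambda>n. y (k n) j - y (l n) j)"
      using coordinates J(1) kl unfolding weakly_p_Cauchy_def by blast
    then have "\<forall>g\<in>dual (sc j) (W j) (Q j). in_lp p (\<lambda>n. g (y (k n) j - y (l n) j))"
      unfolding weakly_p_summable_def by blast
    moreover have "(\<lambda>v. f (inj_sum j v)) \<in> dual (sc j) (W j) (Q j)"
      using dual_inj_sum[OF f] \<open>j \<in> J\<close> J(1) by blast
    ultimately have "in_lp p (\<lambda>n. f (inj_sum j (y (k n) j - y (l n) j)))" by (rule bspec)
    then show "in_lp p (\<lambda>n. f (inj_sum j (?d n j)))" by simp
  qed
  moreover have "f (?d n) = (\<Sum>j\<in>J. f (inj_sum j (?d n j)))" for n
    using additive_eq_sum_coordinates[OF _ J(2), of f "?d n"] dual_add[OF f] J(3)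
      lin_space_diff[OF lin_space] y by simp
  ultimately show "in_lp p (\<lambda>n. f (y (k n) - y (l n)))" by simp
qed

end

subsection \<open>Products\<close>

lemma lin_space_prod_V:
  assumes "\<forall>i\<in>I. lin_space (sc i) (V i)" shows "lin_space (fam_sc I sc) (prod_V I V)"
  using assms unfolding lin_space_def fam_sc_def prod_V_def by (auto simp: fun_eq_iff)

lemma coordinate_lcs_prod:
  assumes lcs: "\<forall>i\<in>I. lcs (sc i) (V i) (P i)"
  shows "coordinate_lcs I sc V P (prod_V I V) (prod_P I P)"
proof
  have lin: "\<forall>i\<in>I. lin_space (sc i) (V i)" using lcs unfolding lcs_def by blast
  then have zero: "0 \<in> V i" if "i \<in> I" for i using that unfolding lin_space_def by blast
  show "lin_space (fam_sc I sc) (prod_V I V)" using lin by (rule lin_space_prod_V)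
  show "inj_sum i v \<in> prod_V I V" if "i \<in> I" "v \<in> V i" for i v
    using that zero unfolding prod_V_def inj_sum_def by auto
  show "zero_on J z \<in> prod_V I V" if "z \<in> prod_V I V" for J z
    using that zero unfolding prod_V_def zero_on_def by auto
  show "seminorm_on (fam_sc I sc) (prod_V I V) q" if q: "q \<in> prod_P I P" for q
  proof -
    obtain i q' where "q = (\<lambda>z. q' (z i))" "i \<in> I" "q' \<in> P i"
      using q unfolding prod_P_def by blast
    then show ?thesis using lcs seminorm_on_coordinate[of i I sc V q' "prod_V I V"] unfolding lcs_def by blast
  qed
  show "dominated_by (P i) (V i) (\<lambda>v. q (inj_sum i v))" if "i \<in> I" and q: "q \<in> prod_P I P" for i q
  proof -
    obtain j q' where q: "q = (\<lambda>z. q' (z j))" "j \<in> I" "q' \<in> P j"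
      using q unfolding prod_P_def by blast
    show ?thesis
    proof (cases "i = j")
      case True
      then show ?thesis using q dominated_by_mem by (simp add: inj_sum_def)
    next
      case False
      have "q' 0 = 0" using lcs_seminorm_zero lcs q(2,3) by blast
      then show ?thesis using q False by (intro dominated_by_nonpos) (simp add: inj_sum_def)
    qed
  qed
  show "lcs (sc i) (V i) (P i)" if "i \<in> I" for i using lcs that by blast
  show "prod_V I V \<subseteq> prod_V I V" ..
  show "(\<lambda>z. q (z i)) \<in> prod_P I P" if "i \<in> I" "q \<in> P i" for i q
    using that unfolding prod_P_def by blast
qed

text \<open>\<open>J\<close> consists of the coordinates of the finitely many seminorms dominating \<open>f\<close>.\<close>
lemma dual_prod_finite_dependence:
  assumes lcs: "\<forall>i\<in>I. lcs (sc i) (V i) (P i)"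
    and f: "f \<in> dual (fam_sc I sc) (prod_V I V) (prod_P I P)"
  obtains J where "J \<subseteq> I" "finite J" "\<forall>z\<in>prod_V I V. f (zero_on J z) = 0"
proof -
  interpret coordinate_lcs I sc V P "prod_V I V" "prod_P I P" by (rule coordinate_lcs_prod[OF lcs])
  obtain F C where F: "F \<subseteq> prod_P I P" "finite F" "\<forall>z\<in>prod_V I V. norm (f z) \<le> C * (\<Sum>q\<in>F. q z)"
    using f unfolding dual_def by blast
  have "\<forall>q\<in>F. \<exists>i. i \<in> I \<and> (\<exists>q'\<in>P i. q = (\<lambda>z. q' (z i)))"
    using F(1) unfolding prod_P_def by blast
  then obtain idx where idx: "\<forall>q\<in>F. idx q \<in> I \<and> (\<exists>q'\<in>P (idx q). q = (\<lambda>z. q' (z (idx q))))"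
    by (rule bchoice[elim_format]) blast
  have "f (zero_on (idx ` F) z) = 0" if z: "z \<in> prod_V I V" for z
  proof -
    have "q (zero_on (idx ` F) z) = 0" if "q \<in> F" for q
    proof -
      obtain i q' where "i \<in> I" "q' \<in> P i" "q = (\<lambda>z. q' (z i))" "i \<in> idx ` F"
        using idx \<open>q \<in> F\<close> by blast
      moreover have "q' 0 = 0" using lcs_seminorm_zero components calculation(1,2) by blast
      ultimately show ?thesis by (simp add: zero_on_def)
    qed
    then have "(\<Sum>q\<in>F. q (zero_on (idx ` F) z)) = 0" by (simp add: sum.neutral)
    then have "norm (f (zero_on (idx ` F) z)) \<le> 0"
      using F(3) zero_on_mem[OF z] by (metis mult_zero_right)
    then show ?thesis by simp
  qed
  then show thesis using that[of "idx ` F"] idx F(2) by blast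
qed

lemma wCSP_prod:
  fixes V :: "'i \<Rightarrow> 'b::ab_group_add set" and sc :: "'i \<Rightarrow> 'k::real_normed_field \<Rightarrow> 'b \<Rightarrow> 'b"
  assumes p: "1 \<le> p" and I: "countable I" and lcs: "\<forall>i\<in>I. lcs (sc i) (V i) (P i)"
    and wCSP: "\<forall>i\<in>I. wCSP p (sc i) (V i) (P i)"
  shows "wCSP p (fam_sc I sc) (prod_V I V) (prod_P I P)"
  unfolding wCSP_def
proof (intro allI impI)
  interpret coordinate_lcs I sc V P "prod_V I V" "prod_P I P" by (rule coordinate_lcs_prod[OF lcs])
  fix x :: "nat \<Rightarrow> 'i \<Rightarrow> 'b"
  assume x: "(\<forall>n. x n \<in> prod_V I V) \<and> lcs_bounded (prod_P I P) (range x)"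
  obtain r where r: "strict_mono r" "\<And>i. i \<in> I \<Longrightarrow> weakly_p_Cauchy p (sc i) (V i) (P i) (\<lambda>n. x (r n) i)"
  proof (rule diagonal_weakly_p_Cauchy_subseq[OF I])
    show "lin_space (sc i) (V i)" if "i \<in> I" for i using component_lin_space that .
    show "wCSP p (sc i) (V i) (P i)" if "i \<in> I" for i using wCSP that by blast
    show "x n i \<in> V i" if "i \<in> I" for i n using coordinate_mem x that by blast
    show "lcs_bounded (P i) (range (\<lambda>n. x n i))" if "i \<in> I" for i using bounded_coordinate x that by blast
  qed (rule that)
  have "weakly_p_Cauchy p (fam_sc I sc) (prod_V I V) (prod_P I P) (x \<circ> r)"
  proof (rule weakly_p_Cauchy_of_coordinates[OF p])
    show "\<forall>n. (x \<circ> r) n \<in> prod_V I V" using x by simp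
    show "\<forall>i\<in>I. weakly_p_Cauchy p (sc i) (V i) (P i) (\<lambda>n. (x \<circ> r) n i)" using r(2) by simp
    show "\<forall>f\<in>dual (fam_sc I sc) (prod_V I V) (prod_P I P). \<exists>J\<subseteq>I. finite J \<and>
        (\<forall>n m. f (zero_on J ((x \<circ> r) n - (x \<circ> r) m)) = 0)"
    proof
      fix f assume "f \<in> dual (fam_sc I sc) (prod_V I V) (prod_P I P)"
      then obtain J where "J \<subseteq> I" "finite J" "\<forall>z\<in>prod_V I V. f (zero_on J z) = 0"
        by (rule dual_prod_finite_dependence[OF lcs])
      moreover have "(x \<circ> r) n - (x \<circ> r) m \<in> prod_V I V" for n m
        using lin_space_diff[OF lin_space] x by simp
      ultimately show "\<exists>J\<subseteq>I. finite J \<and> (\<forall>n m. f (zero_on J ((x \<circ> r) n - (x \<circ> r) m)) = 0)"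
        by blast
    qed
  qed
  then show "\<exists>r. strict_mono r \<and> weakly_p_Cauchy p (fam_sc I sc) (prod_V I V) (prod_P I P) (x \<circ> r)"
    using r(1) by blast
qed

subsection \<open>Locally convex direct sums\<close>

lemma lin_space_subspace:
  assumes "lin_space sc V" "U \<subseteq> V" "0 \<in> U" "\<forall>x\<in>U. \<forall>y\<in>U. x + y \<in> U" "\<forall>c. \<forall>x\<in>U. sc c x \<in> U"
  shows "lin_space sc U"
  using assms unfolding lin_space_def by blast

lemma lin_space_sum_V:
  assumes lin: "\<forall>i\<in>I. lin_space (sc i) (W i)" shows "lin_space (fam_sc I sc) (sum_V I W)"
proof (rule lin_space_subspace[OF lin_space_prod_V[OF lin]])
  have "lin_space (fam_sc I sc) (prod_V I W)" using lin by (rule lin_space_prod_V)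
  then show "0 \<in> sum_V I W" unfolding sum_V_def lin_space_def by simp
  show "\<forall>x\<in>sum_V I W. \<forall>y\<in>sum_V I W. x + y \<in> sum_V I W"
  proof (intro ballI)
    fix x y assume "x \<in> sum_V I W" "y \<in> sum_V I W"
    moreover have "{i. (x + y) i \<noteq> 0} \<subseteq> {i. x i \<noteq> 0} \<union> {i. y i \<noteq> 0}" by auto
    ultimately show "x + y \<in> sum_V I W"
      using \<open>lin_space _ (prod_V I W)\<close> unfolding sum_V_def lin_space_def by (auto intro: finite_subset)
  qed
  show "\<forall>c. \<forall>x\<in>sum_V I W. fam_sc I sc c x \<in> sum_V I W"
  proof (intro allI ballI)
    fix c x assume "x \<in> sum_V I W"
    moreover have "{i. fam_sc I sc c x i \<noteq> 0} \<subseteq> {i. x i \<noteq> 0}"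
      using lin lin_space_scale_zero_right[of "sc _"] unfolding fam_sc_def by auto
    ultimately show "fam_sc I sc c x \<in> sum_V I W"
      using \<open>lin_space _ (prod_V I W)\<close> unfolding sum_V_def lin_space_def by (auto intro: finite_subset)
  qed
qed (auto simp: sum_V_def)

lemma mem_sum_P_iff:
  "q \<in> sum_P I sc W Q \<longleftrightarrow> seminorm_on (fam_sc I sc) (sum_V I W) q
     \<and> (\<forall>i\<in>I. dominated_by (Q i) (W i) (\<lambda>v. q (inj_sum i v)))"
  unfolding sum_P_def dominated_by_def by blast

lemma coordinate_mem_sum_P:
  assumes lcs: "\<forall>i\<in>I. lcs (sc i) (W i) (Q i)" and i: "i \<in> I" and q: "q \<in> Q i"
  shows "(\<lambda>z. q (z i)) \<in> sum_P I sc W Q"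
  unfolding mem_sum_P_iff
proof
  show "seminorm_on (fam_sc I sc) (sum_V I W) (\<lambda>z. q (z i))"
    using lcs i q unfolding sum_V_def lcs_def by (intro seminorm_on_coordinate[OF i]) auto
  have "q 0 = 0" using lcs_seminorm_zero lcs i q by blast
  show "\<forall>j\<in>I. dominated_by (Q j) (W j) (\<lambda>v. q (inj_sum j v i))"
  proof
    fix j assume "j \<in> I"
    show "dominated_by (Q j) (W j) (\<lambda>v. q (inj_sum j v i))"
    proof (cases "j = i")
      case True
      then show ?thesis using q dominated_by_mem by (simp add: inj_sum_def)
    next
      case False
      then show ?thesis using \<open>q 0 = 0\<close> by (intro dominated_by_nonpos) (simp add: inj_sum_def)
    qed
  qed
qed

lemma coordinate_lcs_sum:
  assumes lcs: "\<forall>i\<in>I. lcs (sc i) (W i) (Q i)"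
  shows "coordinate_lcs I sc W Q (sum_V I W) (sum_P I sc W Q)"
proof
  have lin: "\<forall>i\<in>I. lin_space (sc i) (W i)" using lcs unfolding lcs_def by blast
  then have zero: "0 \<in> W i" if "i \<in> I" for i using that unfolding lin_space_def by blast
  show "lcs (sc i) (W i) (Q i)" if "i \<in> I" for i using lcs that by blast
  show "lin_space (fam_sc I sc) (sum_V I W)" using lin by (rule lin_space_sum_V)
  show "sum_V I W \<subseteq> prod_V I W" unfolding sum_V_def by blast
  show "inj_sum i v \<in> sum_V I W" if "i \<in> I" "v \<in> W i" for i v
  proof -
    have "{j. inj_sum i v j \<noteq> 0} \<subseteq> {i}" by (auto simp: inj_sum_def)
    then show ?thesis using that zero finite_subset unfolding sum_V_def prod_V_def inj_sum_def by auto
  qed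
  show "zero_on J z \<in> sum_V I W" if "z \<in> sum_V I W" for J z
  proof -
    have "{i. zero_on J z i \<noteq> 0} \<subseteq> {i. z i \<noteq> 0}" by (auto simp: zero_on_def)
    then have "finite {i. zero_on J z i \<noteq> 0}" using that finite_subset unfolding sum_V_def by blast
    then show ?thesis using that zero unfolding sum_V_def prod_V_def zero_on_def by auto
  qed
  show "seminorm_on (fam_sc I sc) (sum_V I W) q" if "q \<in> sum_P I sc W Q" for q
    using that unfolding mem_sum_P_iff by blast
  show "dominated_by (Q i) (W i) (\<lambda>v. q (inj_sum i v))" if "i \<in> I" "q \<in> sum_P I sc W Q" for i q
    using that unfolding mem_sum_P_iff by blast
  show "(\<lambda>z. q (z i)) \<in> sum_P I sc W Q" if "i \<in> I" "q \<in> Q i" for i q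
    using lcs that by (rule coordinate_mem_sum_P)
qed

definition weighted_seminorm ::
    "(nat \<Rightarrow> 'i) \<Rightarrow> (nat \<Rightarrow> real) \<Rightarrow> (nat \<Rightarrow> 'b::zero \<Rightarrow> real) \<Rightarrow> ('i \<Rightarrow> 'b) \<Rightarrow> real" where
  "weighted_seminorm \<iota> c q z = (\<Sum>k | z (\<iota> k) \<noteq> 0. c k * q k (z (\<iota> k)))"

lemma weighted_seminorm_eq_sum:
  assumes "finite K" "{k. z (\<iota> k) \<noteq> 0} \<subseteq> K" "\<And>k. q k 0 = 0"
  shows "weighted_seminorm \<iota> c q z = (\<Sum>k\<in>K. c k * q k (z (\<iota> k)))"
  unfolding weighted_seminorm_def by (rule sum.mono_neutral_left) (use assms in auto)

lemma finite_support_inj: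
  assumes "inj \<iota>" "z \<in> sum_V I W" shows "finite {k. z (\<iota> k) \<noteq> 0}"
proof -
  have "finite (\<iota> -` {i. z i \<noteq> 0})" using assms unfolding sum_V_def by (intro finite_vimageI) auto
  then show ?thesis by (simp add: vimage_def)
qed

lemma seminorm_on_weighted_seminorm:
  assumes lin: "\<forall>i\<in>I. lin_space (sc i) (W i)" and \<iota>: "inj \<iota>" "range \<iota> \<subseteq> I"
    and q: "\<And>k. seminorm_on (sc (\<iota> k)) (W (\<iota> k)) (q k)" and c: "\<And>k. 0 \<le> c k"
  shows "seminorm_on (fam_sc I sc) (sum_V I W) (weighted_seminorm \<iota> c q)"
  unfolding seminorm_on_def
proof (intro conjI ballI allI)
  have q0: "q k 0 = 0" for k using seminorm_on_zero[OF _ q] lin \<iota>(2) by blast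
  have mem: "z (\<iota> k) \<in> W (\<iota> k)" if "z \<in> sum_V I W" for z k
    using that \<iota>(2) unfolding sum_V_def prod_V_def by auto
  fix y z assume y: "y \<in> sum_V I W" and z: "z \<in> sum_V I W"
  let ?K = "{k. y (\<iota> k) \<noteq> 0} \<union> {k. z (\<iota> k) \<noteq> 0}"
  have K: "finite ?K" using finite_support_inj[OF \<iota>(1)] y z by blast
  have eq: "weighted_seminorm \<iota> c q u = (\<Sum>k\<in>?K. c k * q k (u (\<iota> k)))" if "{k. u (\<iota> k) \<noteq> 0} \<subseteq> ?K" for u
    using weighted_seminorm_eq_sum[of ?K u \<iota> q c] K that q0 by blast
  have "weighted_seminorm \<iota> c q (y + z) = (\<Sum>k\<in>?K. c k * q k (y (\<iota> k) + z (\<iota> k)))"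
    by (subst eq) auto
  also have "\<dots> \<le> (\<Sum>k\<in>?K. c k * q k (y (\<iota> k)) + c k * q k (z (\<iota> k)))"
    using q mem[OF y] mem[OF z] c unfolding seminorm_on_def
    by (intro sum_mono) (simp add: mult_left_mono flip: distrib_left)
  also have "\<dots> = weighted_seminorm \<iota> c q y + weighted_seminorm \<iota> c q z"
    by (simp add: sum.distrib eq)
  finally show "weighted_seminorm \<iota> c q (y + z) \<le> weighted_seminorm \<iota> c q y + weighted_seminorm \<iota> c q z" .
next
  have q0: "q k 0 = 0" for k using seminorm_on_zero[OF _ q] lin \<iota>(2) by blast
  fix a z assume z: "z \<in> sum_V I W"
  let ?K = "{k. z (\<iota> k) \<noteq> 0}"
  have K: "finite ?K" using finite_support_inj[OF \<iota>(1) z] .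
  have scale: "fam_sc I sc a z (\<iota> k) = sc (\<iota> k) a (z (\<iota> k))" for k
    using \<iota>(2) unfolding fam_sc_def by auto
  have "{k. fam_sc I sc a z (\<iota> k) \<noteq> 0} \<subseteq> ?K"
    unfolding scale using lin_space_scale_zero_right lin \<iota>(2) by fastforce
  then have "weighted_seminorm \<iota> c q (fam_sc I sc a z) = (\<Sum>k\<in>?K. c k * q k (sc (\<iota> k) a (z (\<iota> k))))"
    unfolding scale[symmetric] using weighted_seminorm_eq_sum[of ?K _ \<iota> q c] K q0 by blast
  also have "\<dots> = (\<Sum>k\<in>?K. norm a * (c k * q k (z (\<iota> k))))"
  proof (rule sum.cong)
    fix k
    have "z (\<iota> k) \<in> W (\<iota> k)" using z \<iota>(2) unfolding sum_V_def prod_V_def by auto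
    then show "c k * q k (sc (\<iota> k) a (z (\<iota> k))) = norm a * (c k * q k (z (\<iota> k)))"
      using q[of k] unfolding seminorm_on_def by simp
  qed simp
  also have "\<dots> = norm a * weighted_seminorm \<iota> c q z"
    by (simp add: weighted_seminorm_def sum_distrib_left)
  finally show "weighted_seminorm \<iota> c q (fam_sc I sc a z) = norm a * weighted_seminorm \<iota> c q z" .
qed

lemma weighted_seminorm_in_sum_P:
  assumes lcs: "\<forall>i\<in>I. lcs (sc i) (W i) (Q i)" and \<iota>: "inj \<iota>" "range \<iota> \<subseteq> I"
    and q: "\<And>k. q k \<in> Q (\<iota> k)" and c: "\<And>k. 0 \<le> c k"
  shows "weighted_seminorm \<iota> c q \<in> sum_P I sc W Q"
  unfolding mem_sum_P_iff
proof
  have lin: "\<forall>i\<in>I. lin_space (sc i) (W i)" using lcs unfolding lcs_def by blast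
  have lcs_k: "lcs (sc (\<iota> k)) (W (\<iota> k)) (Q (\<iota> k))" for k using lcs \<iota>(2) by blast
  have "seminorm_on (sc (\<iota> k)) (W (\<iota> k)) (q k)" for k using lcs_k q unfolding lcs_def by blast
  then show "seminorm_on (fam_sc I sc) (sum_V I W) (weighted_seminorm \<iota> c q)"
    by (rule seminorm_on_weighted_seminorm[OF lin \<iota>]) (rule c)
  have q0: "q k 0 = 0" for k using lcs_seminorm_zero[OF lcs_k q] .
  show "\<forall>i\<in>I. dominated_by (Q i) (W i) (\<lambda>v. weighted_seminorm \<iota> c q (inj_sum i v))"
  proof
    fix i assume "i \<in> I"
    show "dominated_by (Q i) (W i) (\<lambda>v. weighted_seminorm \<iota> c q (inj_sum i v))"
    proof (cases "i \<in> range \<iota>")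
      case True
      then obtain k where k: "i = \<iota> k" by blast
      have single: "weighted_seminorm \<iota> c q (inj_sum (\<iota> k) v) = c k * q k v" for v
      proof -
        have "{j. inj_sum (\<iota> k) v (\<iota> j) \<noteq> 0} \<subseteq> {k}" using \<iota>(1) by (auto simp: inj_sum_def dest: injD)
        then have "weighted_seminorm \<iota> c q (inj_sum (\<iota> k) v) = (\<Sum>j\<in>{k}. c j * q j (inj_sum (\<iota> k) v (\<iota> j)))"
          using weighted_seminorm_eq_sum[of "{k}" "inj_sum (\<iota> k) v" \<iota> q c] q0 by blast
        then show ?thesis by (simp add: inj_sum_def)
      qed
      show ?thesis unfolding k dominated_by_def using q[of k]
        by (intro exI[of _ "{q k}"] exI[of _ "c k"]) (simp add: single)
    next
      case False
      then have no_support: "{j. inj_sum i v (\<iota> j) \<noteq> 0} = {}" for v by (auto simp: inj_sum_def)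
      have "weighted_seminorm \<iota> c q (inj_sum i v) = 0" for v
        by (simp only: weighted_seminorm_def no_support sum.empty)
      then show ?thesis by (intro dominated_by_nonpos) simp
    qed
  qed
qed

text \<open>If infinitely many coordinates \<open>\<iota> k\<close> were active, with \<open>x (n k)\<close> nonzero at \<open>\<iota> k\<close>,
  the continuous seminorm with weights \<open>k / q\<^sub>k (x (n k) (\<iota> k))\<close> would be unbounded on \<open>x\<close>.\<close>
lemma bounded_sum_V_finite_support:
  assumes lcs: "\<forall>i\<in>I. lcs (sc i) (W i) (Q i)"
    and x: "\<forall>n. x n \<in> sum_V I W" "lcs_bounded (sum_P I sc W Q) (range x)"
  shows "finite {i. \<exists>n. x n i \<noteq> 0}"
proof (rule ccontr)
  interpret coordinate_lcs I sc W Q "sum_V I W" "sum_P I sc W Q" by (rule coordinate_lcs_sum[OF lcs])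
  assume "infinite {i. \<exists>n. x n i \<noteq> 0}"
  then obtain \<iota> :: "nat \<Rightarrow> 'a" where \<iota>: "inj \<iota>" "range \<iota> \<subseteq> {i. \<exists>n. x n i \<noteq> 0}"
    using infinite_countable_subset by blast
  have \<iota>I: "range \<iota> \<subseteq> I" using \<iota>(2) coordinate_outside x(1) by blast
  have "\<forall>k. \<exists>n. x n (\<iota> k) \<noteq> 0" using \<iota>(2) by blast
  then obtain n where n: "x (n k) (\<iota> k) \<noteq> 0" for k by metis
  have mem: "x m (\<iota> k) \<in> W (\<iota> k)" for m k using coordinate_mem x(1) \<iota>I by blast
  have lcs_k: "lcs (sc (\<iota> k)) (W (\<iota> k)) (Q (\<iota> k))" for k using components \<iota>I by blast
  have "\<exists>q\<in>Q (\<iota> k). q (x (n k) (\<iota> k)) \<noteq> 0" for k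
    using lcs_k[of k] mem n unfolding lcs_def by blast
  then obtain q where q: "q k \<in> Q (\<iota> k)" "q k (x (n k) (\<iota> k)) \<noteq> 0" for k by metis
  have q_nonneg: "0 \<le> q k (x m (\<iota> k))" for k m using lcs_seminorm_nonneg[OF lcs_k q(1) mem] .
  have q_pos: "0 < q k (x (n k) (\<iota> k))" for k using q_nonneg[of k "n k"] q(2)[of k] by linarith
  define c where "c k = real k / q k (x (n k) (\<iota> k))" for k
  have c: "0 \<le> c k" for k using q_pos[of k] by (simp add: c_def)
  have "weighted_seminorm \<iota> c q \<in> sum_P I sc W Q"
    using weighted_seminorm_in_sum_P[OF lcs \<iota>(1) \<iota>I q(1) c] .
  then obtain B where B: "weighted_seminorm \<iota> c q (x m) \<le> B" for m
    using x(2) unfolding lcs_bounded_def bdd_above_def by blast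
  have "real k \<le> weighted_seminorm \<iota> c q (x (n k))" for k
  proof -
    have "real k = c k * q k (x (n k) (\<iota> k))" using q_pos[of k] by (simp add: c_def)
    also have "\<dots> \<le> weighted_seminorm \<iota> c q (x (n k))"
      unfolding weighted_seminorm_def
    proof (rule member_le_sum)
      show "finite {j. x (n k) (\<iota> j) \<noteq> 0}" using finite_support_inj[OF \<iota>(1)] x(1) by blast
      show "0 \<le> c j * q j (x (n k) (\<iota> j))" for j using c q_nonneg by simp
    qed (use n in simp)
    finally show ?thesis .
  qed
  moreover have "B < real (nat \<lceil>B\<rceil> + 1)" by linarith
  ultimately show False using B[of "n (nat \<lceil>B\<rceil> + 1)"] by (meson not_le order_trans)
qed

lemma wCSP_sum:
  fixes W :: "'i \<Rightarrow> 'b::ab_group_add set" and sc :: "'i \<Rightarrow> 'k::real_normed_field \<Rightarrow> 'b \<Rightarrow> 'b"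
  assumes p: "1 \<le> p" and lcs: "\<forall>i\<in>I. lcs (sc i) (W i) (Q i)"
    and wCSP: "\<forall>i\<in>I. wCSP p (sc i) (W i) (Q i)"
  shows "wCSP p (fam_sc I sc) (sum_V I W) (sum_P I sc W Q)"
  unfolding wCSP_def
proof (intro allI impI)
  interpret coordinate_lcs I sc W Q "sum_V I W" "sum_P I sc W Q" by (rule coordinate_lcs_sum[OF lcs])
  fix x :: "nat \<Rightarrow> 'i \<Rightarrow> 'b"
  assume x: "(\<forall>n. x n \<in> sum_V I W) \<and> lcs_bounded (sum_P I sc W Q) (range x)"
  define J where "J = {i. \<exists>n. x n i \<noteq> 0}"
  have J: "finite J" "J \<subseteq> I" "\<And>n i. i \<notin> J \<Longrightarrow> x n i = 0"
    using bounded_sum_V_finite_support[OF lcs] x coordinate_outside unfolding J_def by blast+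
  obtain r where r: "strict_mono r" "\<And>i. i \<in> J \<Longrightarrow> weakly_p_Cauchy p (sc i) (W i) (Q i) (\<lambda>n. x (r n) i)"
  proof (rule diagonal_weakly_p_Cauchy_subseq[OF countable_finite[OF J(1)]])
    show "lin_space (sc i) (W i)" if "i \<in> J" for i using component_lin_space J(2) that by blast
    show "wCSP p (sc i) (W i) (Q i)" if "i \<in> J" for i using wCSP J(2) that by blast
    show "x n i \<in> W i" if "i \<in> J" for i n using coordinate_mem x J(2) that by blast
    show "lcs_bounded (Q i) (range (\<lambda>n. x n i))" if "i \<in> J" for i
      using bounded_coordinate x J(2) that by blast
  qed (rule that)
  have "weakly_p_Cauchy p (fam_sc I sc) (sum_V I W) (sum_P I sc W Q) (x \<circ> r)"
  proof (rule weakly_p_Cauchy_of_coordinates[OF p])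
    show "\<forall>n. (x \<circ> r) n \<in> sum_V I W" using x by simp
    show "\<forall>i\<in>I. weakly_p_Cauchy p (sc i) (W i) (Q i) (\<lambda>n. (x \<circ> r) n i)"
    proof
      fix i assume "i \<in> I"
      show "weakly_p_Cauchy p (sc i) (W i) (Q i) (\<lambda>n. (x \<circ> r) n i)"
      proof (cases "i \<in> J")
        case False
        then show ?thesis using J(3) weakly_p_Cauchy_zero component_lin_space[OF \<open>i \<in> I\<close>] by simp
      qed (use r(2) in simp)
    qed
    show "\<forall>f\<in>dual (fam_sc I sc) (sum_V I W) (sum_P I sc W Q). \<exists>J\<subseteq>I. finite J \<and>
        (\<forall>n m. f (zero_on J ((x \<circ> r) n - (x \<circ> r) m)) = 0)"
    proof
      fix f assume "f \<in> dual (fam_sc I sc) (sum_V I W) (sum_P I sc W Q)"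
      moreover have "zero_on J ((x \<circ> r) n - (x \<circ> r) m) = 0" for n m
        using J(3) by (simp add: zero_on_def fun_eq_iff)
      ultimately show "\<exists>J\<subseteq>I. finite J \<and> (\<forall>n m. f (zero_on J ((x \<circ> r) n - (x \<circ> r) m)) = 0)"
        using J(1,2) dual_zero[OF _ lin_space] by auto
    qed
  qed
  then show "\<exists>r. strict_mono r \<and> weakly_p_Cauchy p (fam_sc I sc) (sum_V I W) (sum_P I sc W Q) (x \<circ> r)"
    using r(1) by blast
qed

theorem wCSP_prod_iff:
  fixes V :: "'i \<Rightarrow> 'b::ab_group_add set" and sc :: "'i \<Rightarrow> 'k::real_normed_field \<Rightarrow> 'b \<Rightarrow> 'b"
  assumes "1 \<le> p" "countable I" "\<forall>i\<in>I. lcs (sc i) (V i) (P i)"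
  shows "wCSP p (fam_sc I sc) (prod_V I V) (prod_P I P) \<longleftrightarrow> (\<forall>i\<in>I. wCSP p (sc i) (V i) (P i))"
  using coordinate_lcs.wCSP_component[OF coordinate_lcs_prod[OF assms(3)]] wCSP_prod[OF assms] by blast

theorem wCSP_sum_iff:
  fixes W :: "'i \<Rightarrow> 'b::ab_group_add set" and sc :: "'i \<Rightarrow> 'k::real_normed_field \<Rightarrow> 'b \<Rightarrow> 'b"
  assumes "1 \<le> p" "\<forall>i\<in>I. lcs (sc i) (W i) (Q i)"
  shows "wCSP p (fam_sc I sc) (sum_V I W) (sum_P I sc W Q) \<longleftrightarrow> (\<forall>i\<in>I. wCSP p (sc i) (W i) (Q i))"
  using coordinate_lcs.wCSP_component[OF coordinate_lcs_sum[OF assms(2)]] wCSP_sum[OF assms] by blast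

theorem propositionp:
  fixes p :: ereal
  assumes "1 \<le> p"
  shows
   "(\<forall>(V :: nat \<Rightarrow> 'a::ab_group_add set) (sc :: nat \<Rightarrow> 'k::{real_normed_field,euclidean_space} \<Rightarrow> 'a \<Rightarrow> 'a) P.
       (\<forall>i. lcs (sc i) (V i) (P i)) \<longrightarrow>
       (wCSP p (fam_sc UNIV sc) (prod_V UNIV V) (prod_P UNIV P) \<longleftrightarrow> (\<forall>i. wCSP p (sc i) (V i) (P i))))
    \<and> (\<forall>(I :: 'i set) (W :: 'i \<Rightarrow> 'b::ab_group_add set) (sc' :: 'i \<Rightarrow> 'k \<Rightarrow> 'b \<Rightarrow> 'b) Q.
       I \<noteq> {} \<and> (\<forall>i\<in>I. lcs (sc' i) (W i) (Q i)) \<longrightarrow>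
       (wCSP p (fam_sc I sc') (sum_V I W) (sum_P I sc' W Q) \<longleftrightarrow> (\<forall>i\<in>I. wCSP p (sc' i) (W i) (Q i))))"
proof (intro conjI allI impI)
  fix V :: "nat \<Rightarrow> 'a set" and sc :: "nat \<Rightarrow> 'k \<Rightarrow> 'a \<Rightarrow> 'a" and P
  assume "\<forall>i. lcs (sc i) (V i) (P i)"
  then show "wCSP p (fam_sc UNIV sc) (prod_V UNIV V) (prod_P UNIV P) \<longleftrightarrow> (\<forall>i. wCSP p (sc i) (V i) (P i))"
    using wCSP_prod_iff[OF assms countableI_type, where I = UNIV and sc = sc and V = V and P = P] by simp
next
  fix I :: "'i set" and W :: "'i \<Rightarrow> 'b set" and sc' :: "'i \<Rightarrow> 'k \<Rightarrow> 'b \<Rightarrow> 'b" and Q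
  assume "I \<noteq> {} \<and> (\<forall>i\<in>I. lcs (sc' i) (W i) (Q i))"
  then show "wCSP p (fam_sc I sc') (sum_V I W) (sum_P I sc' W Q) \<longleftrightarrow> (\<forall>i\<in>I. wCSP p (sc' i) (W i) (Q i))"
    using wCSP_sum_iff[OF assms] by blast
qed

end
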